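(* Let $\mathcal A$ be a commutative unital $C^*$-algebra, let $(E,\langle\cdot,\cdot\rangle)$ be a Hilbert $\mathcal A$-module in which every closed submodule is orthogonally complemented, and let $\xi\in E$ with $\langle\xi,\xi\rangle$ invertible. Equip $E$ with the standard $\mathcal A$-2-inner product $\langle x,y|z\rangle=\langle x,y\rangle\langle z,z\rangle-\langle x,z\rangle\langle z,y\rangle$, and suppose $\{x_i\}_{i\in\mathbb N}\subset E$ satisfies, for some reals $0<A\le B$ and all $x\in E$, $$A\langle x,x|\xi\rangle\le\sum_{i}\langle x,x_i|\xi\rangle\langle x_i,x|\xi\rangle\le B\langle x,x|\xi\rangle.$$ Let $L_\xi^{\perp}=\{x\in E:\langle a\xi,x\rangle=0\ \text{for all } a\in\mathcal A\}$. Then there exist reals $0<C\le D$ such that $C\langle x,x\rangle\le\sum_i\langle x,x_i\rangle\langle x_i,x\rangle\le D\langle x,x\rangle$ for all $x\in L_\xi^\perp$; that is, $\{x_i\}$ is a frame for $L_\xi^\perp$.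
   Context: A Hilbert $\mathcal A$-module is a left $\mathcal A$-module $E$ with an $\mathcal A$-valued inner product $\langle\cdot,\cdot\rangle$ satisfying $\langle x,x\rangle\ge0$, $\langle x,x\rangle=0$ iff $x=0$, $\langle x,y\rangle=\langle y,x\rangle^*$, $\langle ax,by\rangle=a^*\langle x,y\rangle b$, complex-linear in the second variable, and complete for $\|x\|=\|\langle x,x\rangle\|^{1/2}$. Inequalities between elements of $\mathcal A$ refer to the order on self-adjoint elements; all series converge in norm. *)

theory Defs
  imports "HOL-Analysis.Analysis"
begin

text \<open>A commutative unital C*-algebra. The carrier is a type that is a commutative
unital real Banach algebra; the complex scalar multiplication cscale and the
involution star are given explicitly.\<close>

definition comm_cstar_algebra ::
  "('a::{comm_ring_1, real_normed_algebra_1, banach} \<Rightarrow> 'a) \<Rightarrow> (complex \<Rightarrow> 'a \<Rightarrow> 'a) \<Rightarrow> bool" where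
  "comm_cstar_algebra star cscale \<longleftrightarrow>
     (\<forall>r a. cscale (complex_of_real r) a = scaleR r a) \<and>
     (\<forall>c d a. cscale (c * d) a = cscale c (cscale d a)) \<and>
     (\<forall>c d a. cscale (c + d) a = cscale c a + cscale d a) \<and>
     (\<forall>c a b. cscale c (a + b) = cscale c a + cscale c b) \<and>
     (\<forall>c a b. cscale c (a * b) = cscale c a * b) \<and>
     (\<forall>c a. norm (cscale c a) = cmod c * norm a) \<and>
     (\<forall>a. star (star a) = a) \<and>
     (\<forall>a b. star (a + b) = star a + star b) \<and>
     (\<forall>c a. star (cscale c a) = cscale (cnj c) (star a)) \<and>
     (\<forall>a b. star (a * b) = star b * star a) \<and>
     (\<forall>a. norm (star a * a) = (norm a)\<^sup>2)"

definition cstar_pos :: "('a::ring \<Rightarrow> 'a) \<Rightarrow> 'a \<Rightarrow> bool" where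
  "cstar_pos star a \<longleftrightarrow> (\<exists>c. a = star c * c)"

definition cstar_le :: "('a::ring \<Rightarrow> 'a) \<Rightarrow> 'a \<Rightarrow> 'a \<Rightarrow> bool" where
  "cstar_le star a b \<longleftrightarrow> star a = a \<and> star b = b \<and> cstar_pos star (b - a)"

definition hm_tendsto :: "('e::ab_group_add \<Rightarrow> 'e \<Rightarrow> 'a::real_normed_vector) \<Rightarrow> (nat \<Rightarrow> 'e) \<Rightarrow> 'e \<Rightarrow> bool" where
  "hm_tendsto ip f x \<longleftrightarrow> (\<lambda>n. sqrt (norm (ip (f n - x) (f n - x)))) \<longlonglongrightarrow> 0"

definition hm_cauchy :: "('e::ab_group_add \<Rightarrow> 'e \<Rightarrow> 'a::real_normed_vector) \<Rightarrow> (nat \<Rightarrow> 'e) \<Rightarrow> bool" where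
  "hm_cauchy ip f \<longleftrightarrow> (\<forall>e>0. \<exists>N. \<forall>m\<ge>N. \<forall>n\<ge>N. sqrt (norm (ip (f m - f n) (f m - f n))) < e)"

definition hilbert_module ::
  "('a::{comm_ring_1, real_normed_algebra_1, banach} \<Rightarrow> 'a) \<Rightarrow> (complex \<Rightarrow> 'a \<Rightarrow> 'a)
   \<Rightarrow> ('a \<Rightarrow> 'e::ab_group_add \<Rightarrow> 'e) \<Rightarrow> ('e \<Rightarrow> 'e \<Rightarrow> 'a) \<Rightarrow> bool" where
  "hilbert_module star cscale act ip \<longleftrightarrow>
     comm_cstar_algebra star cscale \<and>
     (\<forall>a x y. act a (x + y) = act a x + act a y) \<and>
     (\<forall>a b x. act (a + b) x = act a x + act b x) \<and>
     (\<forall>a b x. act (a * b) x = act a (act b x)) \<and>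
     (\<forall>x. act 1 x = x) \<and>
     (\<forall>x. cstar_pos star (ip x x)) \<and>
     (\<forall>x. ip x x = 0 \<longleftrightarrow> x = 0) \<and>
     (\<forall>x y. ip x y = star (ip y x)) \<and>
     (\<forall>a b x y. ip (act a x) (act b y) = star a * ip x y * b) \<and>
     (\<forall>x y z. ip x (y + z) = ip x y + ip x z) \<and>
     (\<forall>f. hm_cauchy ip f \<longrightarrow> (\<exists>x. hm_tendsto ip f x))"

definition submodule :: "('a \<Rightarrow> 'e::ab_group_add \<Rightarrow> 'e) \<Rightarrow> 'e set \<Rightarrow> bool" where
  "submodule act M \<longleftrightarrow> 0 \<in> M \<and> (\<forall>x\<in>M. \<forall>y\<in>M. x + y \<in> M) \<and> (\<forall>a. \<forall>x\<in>M. act a x \<in> M)"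

definition hm_closed :: "('e::ab_group_add \<Rightarrow> 'e \<Rightarrow> 'a::real_normed_vector) \<Rightarrow> 'e set \<Rightarrow> bool" where
  "hm_closed ip M \<longleftrightarrow> (\<forall>f x. (\<forall>n. f n \<in> M) \<and> hm_tendsto ip f x \<longrightarrow> x \<in> M)"

definition orth_compl :: "('e \<Rightarrow> 'e \<Rightarrow> 'a::zero) \<Rightarrow> 'e set \<Rightarrow> 'e set" where
  "orth_compl ip M = {y. \<forall>m\<in>M. ip m y = 0}"

definition orth_complemented :: "('e::ab_group_add \<Rightarrow> 'e \<Rightarrow> 'a::zero) \<Rightarrow> 'e set \<Rightarrow> bool" where
  "orth_complemented ip M \<longleftrightarrow> (\<forall>x. \<exists>m\<in>M. \<exists>n\<in>orth_compl ip M. x = m + n)"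

definition two_ip :: "('e \<Rightarrow> 'e \<Rightarrow> 'a::ring) \<Rightarrow> 'e \<Rightarrow> 'e \<Rightarrow> 'e \<Rightarrow> 'a" where
  "two_ip ip x y z = ip x y * ip z z - ip x z * ip z y"

definition L_perp :: "('a \<Rightarrow> 'e \<Rightarrow> 'e) \<Rightarrow> ('e \<Rightarrow> 'e \<Rightarrow> 'a::zero) \<Rightarrow> 'e \<Rightarrow> 'e set" where
  "L_perp act ip \<xi> = {x. \<forall>a. ip (act a \<xi>) x = 0}"

end

theory Submission
  imports Defs "HOL-Computational_Algebra.Formal_Power_Series"
begin

text \<open>For \<open>x\<close> orthogonal to \<open>\<A>\<xi>\<close> the 2-inner product collapses to
  \<open>\<langle>x,y|\<xi>\<rangle> = \<langle>x,y\<rangle> g\<close> with \<open>g = \<langle>\<xi>,\<xi>\<rangle>\<close> positive and invertible, so the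
  2-frame inequalities read \<open>A\<langle>x,x\<rangle>g \<le> S g\<^sup>2 \<le> B\<langle>x,x\<rangle>g\<close>. Multiplying by the positive
  element \<open>g\<^sup>-\<^sup>2\<close> (the algebra is commutative) gives \<open>A\<langle>x,x\<rangle>g\<^sup>-\<^sup>1 \<le> S \<le> B\<langle>x,x\<rangle>g\<^sup>-\<^sup>1\<close>,
  and \<open>\<parallel>g\<parallel>\<^sup>-\<^sup>1 \<le> g\<^sup>-\<^sup>1 \<le> \<parallel>g\<^sup>-\<^sup>1\<parallel>\<close>.

  The only C*-algebra theory needed is that positive elements form a cone. This follows from
  the characterisation: \<open>a\<close> is positive iff it is self-adjoint with \<open>\<parallel>t - a\<parallel> \<le> t\<close> for some \<open>t\<close>,
  whose hard direction produces square roots from the binomial series of \<open>\<surd>(1 + y)\<close>.\<close>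

lemma gbinomial_minus_half_alternating_nonneg: "0 \<le> ((-1/2::real) gchoose j) * (-1) ^ j"
proof -
  have "fact j * (((-1/2::real) gchoose j) * (-1) ^ j)
      = (\<Prod>i = 0..<j. (-1/2::real) - of_nat i) * (\<Prod>i = 0..<j. (-1::real))"
    by (simp add: gbinomial_mult_fact[symmetric])
  also have "\<dots> = (\<Prod>i = 0..<j. 1/2 + of_nat i)"
    by (subst prod.distrib[symmetric]) (simp add: algebra_simps)
  also have "\<dots> \<ge> 0" by (intro prod_nonneg) auto
  finally show ?thesis
    using fact_gt_zero[where 'a = real, of j] by (simp add: zero_le_mult_iff)
qed

text \<open>Past \<open>k = 0\<close> the coefficients alternate in sign, so partial sums of their absolute values
  are computed by \<open>gbinomial_sum_lower_neg\<close>.\<close>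
lemma abs_gbinomial_half:
  "\<bar>(1/2::real) gchoose k\<bar> = (if k = 0 then 2 else 0) - ((1/2) gchoose k) * (-1) ^ k"
proof (cases k)
  case (Suc j)
  have "((1/2::real) gchoose k) * (-1) ^ k = - ((1/2) / of_nat k * (((-1/2) gchoose j) * (-1) ^ j))"
    using gbinomial_absorption'[of k "1/2::real"] Suc by simp
  also have "\<dots> \<le> 0"
    using gbinomial_minus_half_alternating_nonneg[of j] by simp
  finally have "((1/2::real) gchoose k) * (-1) ^ k \<le> 0" .
  moreover have "\<bar>(1/2::real) gchoose k\<bar> = \<bar>((1/2) gchoose k) * (-1) ^ k\<bar>"
    by (simp add: abs_mult power_abs)
  ultimately show ?thesis using Suc by simp
qed simp

lemma summable_abs_gbinomial_half: "summable (\<lambda>k. \<bar>(1/2::real) gchoose k\<bar>)"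
proof (rule summableI_nonneg_bounded[where x = 2])
  fix n
  show "(\<Sum>k<n. \<bar>(1/2::real) gchoose k\<bar>) \<le> 2"
  proof (cases n)
    case (Suc m)
    have "(\<Sum>k<n. \<bar>(1/2::real) gchoose k\<bar>) = 2 - (\<Sum>k\<le>m. ((1/2) gchoose k) * (-1) ^ k)"
      unfolding abs_gbinomial_half Suc lessThan_Suc_atMost by (simp add: sum_subtractf sum.delta)
    also have "\<dots> = 2 - (-1) ^ m * ((1/2::real) - 1 gchoose m)"
      by (simp only: gbinomial_sum_lower_neg)
    also have "\<dots> \<le> 2"
      using gbinomial_minus_half_alternating_nonneg[of m] by (simp add: mult.commute)
    finally show ?thesis .
  qed simp
qed simp

text \<open>The coefficients of \<open>\<surd>(1 + z)\<close> square to those of \<open>1 + z\<close> (Vandermonde).\<close>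
lemma gbinomial_half_convolution:
  "(\<Sum>i\<le>k. ((1/2::real) gchoose i) * ((1/2) gchoose (k - i))) = (if k \<le> 1 then 1 else 0)"
proof -
  have "(\<Sum>i\<le>k. ((1/2::real) gchoose i) * ((1/2) gchoose (k - i))) = (1/2 + 1/2::real) gchoose k"
    unfolding gbinomial_Vandermonde[symmetric] atMost_atLeast0 ..
  also have "\<dots> = of_nat (1 choose k)" by (simp add: binomial_gbinomial[where 'a = real])
  finally show ?thesis by (cases k) (auto simp: binomial_eq_0)
qed

locale comm_cstar =
  fixes star :: "'a::{comm_ring_1, real_normed_algebra_1, banach} \<Rightarrow> 'a"
    and cscale :: "complex \<Rightarrow> 'a \<Rightarrow> 'a"
  assumes comm_cstar_algebra: "comm_cstar_algebra star cscale"
begin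

abbreviation pos :: "'a \<Rightarrow> bool" where "pos \<equiv> cstar_pos star"

lemma cscale_of_real: "cscale (complex_of_real r) a = r *\<^sub>R a"
  and cscale_mult: "cscale (c * d) a = cscale c (cscale d a)"
  and cscale_times: "cscale c (a * b) = cscale c a * b"
  and norm_cscale: "norm (cscale c a) = cmod c * norm a"
  and star_star [simp]: "star (star a) = a"
  and star_add: "star (a + b) = star a + star b"
  and star_cscale: "star (cscale c a) = cscale (cnj c) (star a)"
  and star_mult: "star (a * b) = star b * star a"
  and norm_star_mult_self: "norm (star a * a) = (norm a)\<^sup>2"
  using comm_cstar_algebra unfolding comm_cstar_algebra_def by auto

lemma star_zero [simp]: "star 0 = 0"
  using star_add[of 0 0] by simp

lemma star_minus: "star (- a) = - star a"
  using star_add[of a "- a"] by (simp add: eq_neg_iff_add_eq_0 add.commute)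

lemma star_diff: "star (a - b) = star a - star b"
  using star_add[of a "- b"] by (simp add: star_minus)

lemma star_one [simp]: "star 1 = 1"
  using star_mult[of "star 1" 1] by simp

lemma star_scaleR: "star (r *\<^sub>R a) = r *\<^sub>R star a"
  using star_cscale[of "complex_of_real r" a] by (simp add: cscale_of_real)

lemma star_power: "star (a ^ n) = star a ^ n"
  by (induction n) (simp_all add: star_mult mult.commute)

lemma norm_star: "norm (star a) = norm a"
proof -
  have le: "norm b \<le> norm (star b)" for b
  proof (cases "b = 0")
    case False
    have "norm b * norm b = norm (star b * b)"
      by (simp add: norm_star_mult_self power2_eq_square)
    also have "\<dots> \<le> norm (star b) * norm b" by (rule norm_mult_ineq)
    finally show ?thesis using False by simp
  qed simp
  show ?thesis using le[of a] le[of "star a"] by simp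
qed

lemma bounded_linear_star: "bounded_linear star"
  by (rule bounded_linear_intro[where K = 1]) (simp_all add: star_add star_scaleR norm_star)

definition imag_unit :: 'a where "imag_unit = cscale \<i> 1"

lemma imag_unit_squared: "imag_unit * imag_unit = -1"
proof -
  have "imag_unit * imag_unit = cscale \<i> (1 * cscale \<i> 1)"
    unfolding imag_unit_def by (rule cscale_times[symmetric])
  also have "\<dots> = cscale (complex_of_real (-1)) 1" by (simp flip: cscale_mult)
  finally show ?thesis using cscale_of_real[of "-1" 1] by simp
qed

lemma star_imag_unit: "star imag_unit = - imag_unit"
proof -
  have "star imag_unit = cscale (complex_of_real (-1) * \<i>) 1"
    unfolding imag_unit_def by (simp add: star_cscale)
  then show ?thesis unfolding imag_unit_def cscale_mult cscale_of_real by simp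
qed

lemma norm_imag_unit_mult: "norm (imag_unit * w) = norm w"
  using cscale_times[of \<i> 1 w] norm_cscale[of \<i> w] by (simp add: imag_unit_def)

lemma sqrt_one_plus_self_adjoint:
  assumes sa: "star y = y" and small: "norm y \<le> 1"
  obtains s where "star s = s" "s * s = 1 + y"
proof -
  define f where "f n = ((1/2) gchoose n) *\<^sub>R y ^ n" for n
  have "norm (f n) \<le> \<bar>(1/2) gchoose n\<bar>" for n
  proof -
    have "norm (y ^ n) \<le> 1"
      using norm_power_ineq[of y n] power_le_one[OF norm_ge_zero small, where n = n] by linarith
    then show ?thesis unfolding f_def by (simp add: mult_left_le)
  qed
  then have abs_summable: "summable (\<lambda>n. norm (f n))"
    by (intro summable_comparison_test[OF _ summable_abs_gbinomial_half]) auto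
  define s where "s = suminf f"
  have "s * s = (\<Sum>k. \<Sum>i\<le>k. f i * f (k - i))"
    unfolding s_def by (rule Cauchy_product[OF abs_summable abs_summable])
  also have "(\<lambda>k. \<Sum>i\<le>k. f i * f (k - i)) = (\<lambda>k. (if k \<le> 1 then 1 else 0) *\<^sub>R y ^ k)"
  proof
    fix k
    have "(\<Sum>i\<le>k. f i * f (k - i)) = (\<Sum>i\<le>k. ((1/2) gchoose i) * ((1/2) gchoose (k - i))) *\<^sub>R y ^ k"
      unfolding scaleR_sum_left f_def by (intro sum.cong) (simp_all flip: power_add)
    then show "(\<Sum>i\<le>k. f i * f (k - i)) = (if k \<le> 1 then 1 else 0) *\<^sub>R y ^ k"
      by (simp add: gbinomial_half_convolution)
  qed
  also have "(\<Sum>k. (if k \<le> 1 then 1 else 0) *\<^sub>R y ^ k) = (\<Sum>k<2. (if k \<le> 1 then 1 else 0) *\<^sub>R y ^ k)"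
    by (rule suminf_finite) auto
  also have "\<dots> = 1 + y" by (simp add: numeral_2_eq_2)
  finally have "s * s = 1 + y" .
  moreover have "star s = s"
  proof -
    have "star s = (\<Sum>n. star (f n))"
      unfolding s_def by (rule bounded_linear.suminf[OF bounded_linear_star summable_norm_cancel[OF abs_summable]])
    also have "(\<lambda>n. star (f n)) = f" unfolding f_def by (simp add: star_scaleR star_power sa)
    finally show ?thesis unfolding s_def .
  qed
  ultimately show ?thesis using that by blast
qed

lemma sqrt_of_near_scalar:
  assumes sa: "star a = a" and near: "norm (t *\<^sub>R 1 - a) \<le> t"
  obtains e where "star e = e" "a = e * e"
proof -
  define t' where "t' = t + 1"
  have t'_pos: "t' > 0" using near norm_ge_zero[of "t *\<^sub>R 1 - a"] unfolding t'_def by linarith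
  have "norm (t' *\<^sub>R 1 - a) \<le> norm (t *\<^sub>R 1 - a) + norm (1::'a)"
    using norm_triangle_ineq[of "t *\<^sub>R 1 - a" 1] by (simp add: t'_def algebra_simps)
  then have near': "norm (t' *\<^sub>R 1 - a) \<le> t'" using near unfolding t'_def by simp
  define y where "y = (1 / t') *\<^sub>R (a - t' *\<^sub>R 1)"
  have "norm y \<le> 1"
    using near' t'_pos by (simp add: y_def norm_minus_commute)
  moreover have "star y = y" unfolding y_def by (simp add: star_scaleR star_diff sa)
  ultimately obtain s where s: "star s = s" "s * s = 1 + y"
    using sqrt_one_plus_self_adjoint by blast
  show ?thesis
  proof
    show "star (sqrt t' *\<^sub>R s) = sqrt t' *\<^sub>R s" by (simp add: star_scaleR s)
    have "sqrt t' *\<^sub>R s * (sqrt t' *\<^sub>R s) = t' *\<^sub>R (1 + y)" using t'_pos s by simp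
    also have "\<dots> = a" unfolding y_def using t'_pos by (simp add: algebra_simps)
    finally show "a = sqrt t' *\<^sub>R s * (sqrt t' *\<^sub>R s)" ..
  qed
qed

text \<open>\<open>z = u + i w\<close> satisfies \<open>z\<^sup>* z = r\<^sup>2\<close>, so \<open>\<parallel>z\<parallel> = \<parallel>z\<^sup>*\<parallel> = r\<close>, and \<open>2 i w = z - z\<^sup>*\<close>.\<close>
lemma norm_le_of_sum_of_squares:
  assumes "star u = u" "star w = w" "u * u + w * w = r\<^sup>2 *\<^sub>R 1" "0 \<le> r"
  shows "norm w \<le> r"
proof -
  define z where "z = u + imag_unit * w"
  have star_z: "star z = u - imag_unit * w"
    unfolding z_def using assms by (simp add: star_add star_mult star_imag_unit)
  have "star z * z = (u - imag_unit * w) * (u + imag_unit * w)"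
    unfolding star_z by (simp only: z_def)
  also have "\<dots> = u * u - (imag_unit * imag_unit) * (w * w)"
    by (simp add: algebra_simps)
  also have "\<dots> = r\<^sup>2 *\<^sub>R 1" using assms(3) by (simp add: imag_unit_squared)
  finally have "(norm z)\<^sup>2 = r\<^sup>2" using norm_star_mult_self[of z] assms(4) by simp
  then have norm_z: "norm z = r" using assms(4) by (simp add: power2_eq_iff_nonneg)
  have "2 * norm w = norm (z - star z)"
    unfolding star_z using norm_imag_unit_mult[of w] by (simp add: z_def flip: scaleR_2)
  also have "\<dots> \<le> norm z + norm (star z)" by (rule norm_triangle_ineq4)
  finally show ?thesis using norm_z by (simp add: norm_star)
qed

lemma norm_square_gap_le:
  assumes sa: "star u = u"
  shows "norm ((norm u)\<^sup>2 *\<^sub>R 1 - u * u) \<le> (norm u)\<^sup>2"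
proof -
  define r where "r = norm u"
  obtain s1 where s1: "star s1 = s1" "r *\<^sub>R 1 - u = s1 * s1"
    using sqrt_of_near_scalar[of "r *\<^sub>R 1 - u" r] sa by (auto simp: r_def star_diff star_scaleR)
  obtain s2 where s2: "star s2 = s2" "r *\<^sub>R 1 + u = s2 * s2"
    using sqrt_of_near_scalar[of "r *\<^sub>R 1 + u" r] sa by (auto simp: r_def star_add star_scaleR)
  define w where "w = s1 * s2"
  have w_sq: "w * w = r\<^sup>2 *\<^sub>R 1 - u * u"
  proof -
    have "w * w = (r *\<^sub>R 1 - u) * (r *\<^sub>R 1 + u)" unfolding w_def s1 s2 by (simp add: ac_simps)
    then show ?thesis by (simp add: algebra_simps power2_eq_square)
  qed
  have "star w = w" by (simp add: w_def star_mult s1 s2 mult.commute)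
  then have "norm w \<le> r"
    by (rule norm_le_of_sum_of_squares[OF sa]) (simp_all add: w_sq r_def)
  then have "norm (w * w) \<le> r\<^sup>2"
    using norm_mult_ineq[of w w] power_mono[of "norm w" r 2] by (simp add: power2_eq_square)
  then show ?thesis using w_sq by (simp add: r_def)
qed

lemma star_mult_self_eq_sum_of_squares:
  obtains u v where "star u = u" "star v = v" "star c * c = u * u + v * v"
proof
  define u where "u = (1/2) *\<^sub>R (c + star c)"
  define v where "v = (1/2) *\<^sub>R (imag_unit * (star c - c))"
  show "star u = u" unfolding u_def by (simp add: star_scaleR star_add add.commute)
  show "star v = v" unfolding v_def
    by (simp add: star_scaleR star_mult star_diff star_imag_unit algebra_simps)
  have "imag_unit * v = (1/2) *\<^sub>R ((imag_unit * imag_unit) * (star c - c))"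
    unfolding v_def by (simp add: mult.assoc)
  then have iv: "imag_unit * v = (1/2) *\<^sub>R (c - star c)"
    by (simp add: imag_unit_squared algebra_simps)
  have "c = u + imag_unit * v" "star c = u - imag_unit * v"
    unfolding iv u_def by (simp_all add: algebra_simps flip: scaleR_2)
  then have "star c * c = (u - imag_unit * v) * (u + imag_unit * v)" by simp
  also have "\<dots> = u * u + v * v" by (simp add: algebra_simps imag_unit_squared)
  finally show "star c * c = u * u + v * v" .
qed

lemma pos_iff_near_scalar: "pos a \<longleftrightarrow> star a = a \<and> (\<exists>t. norm (t *\<^sub>R 1 - a) \<le> t)"
proof
  assume "pos a"
  then obtain c where a: "a = star c * c" unfolding cstar_pos_def by blast
  obtain u v where uv: "star u = u" "star v = v" "a = u * u + v * v"
    using star_mult_self_eq_sum_of_squares a by metis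
  define t where "t = (norm u)\<^sup>2 + (norm v)\<^sup>2"
  have gap: "t *\<^sub>R 1 - a = ((norm u)\<^sup>2 *\<^sub>R 1 - u * u) + ((norm v)\<^sup>2 *\<^sub>R 1 - v * v)"
    unfolding uv t_def by (simp add: algebra_simps)
  have "norm (t *\<^sub>R 1 - a) \<le> t"
    unfolding gap using norm_triangle_ineq[of "(norm u)\<^sup>2 *\<^sub>R 1 - u * u" "(norm v)\<^sup>2 *\<^sub>R 1 - v * v"]
      norm_square_gap_le[OF uv(1)] norm_square_gap_le[OF uv(2)]
    unfolding t_def by linarith
  moreover have "star a = a" using a by (simp add: star_mult)
  ultimately show "star a = a \<and> (\<exists>t. norm (t *\<^sub>R 1 - a) \<le> t)" by blast
next
  assume "star a = a \<and> (\<exists>t. norm (t *\<^sub>R 1 - a) \<le> t)"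
  then obtain e where "star e = e" "a = e * e" using sqrt_of_near_scalar by metis
  then show "pos a" unfolding cstar_pos_def by metis
qed

lemma pos_self_adjoint: "pos a \<Longrightarrow> star a = a"
  by (simp add: pos_iff_near_scalar)

lemma pos_add:
  assumes "pos a" "pos b"
  shows "pos (a + b)"
proof -
  obtain t s where t: "norm (t *\<^sub>R 1 - a) \<le> t" and s: "norm (s *\<^sub>R 1 - b) \<le> s"
    using assms by (auto simp: pos_iff_near_scalar)
  have gap: "(t + s) *\<^sub>R 1 - (a + b) = (t *\<^sub>R 1 - a) + (s *\<^sub>R 1 - b)" by (simp add: algebra_simps)
  have "norm ((t + s) *\<^sub>R 1 - (a + b)) \<le> t + s"
    unfolding gap using norm_triangle_ineq[of "t *\<^sub>R 1 - a" "s *\<^sub>R 1 - b"] t s by linarith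
  then show ?thesis
    using assms by (auto simp: pos_iff_near_scalar star_add)
qed

lemma pos_mult:
  assumes "pos a" "pos b"
  shows "pos (a * b)"
proof -
  obtain c d where "a = star c * c" "b = star d * d" using assms unfolding cstar_pos_def by blast
  then have "a * b = star (c * d) * (c * d)" by (simp add: star_mult ac_simps)
  then show ?thesis unfolding cstar_pos_def by blast
qed

lemma pos_scaleR:
  assumes "0 \<le> r" "pos a"
  shows "pos (r *\<^sub>R a)"
proof -
  obtain c where "a = star c * c" using assms unfolding cstar_pos_def by blast
  then have "r *\<^sub>R a = star (sqrt r *\<^sub>R c) * (sqrt r *\<^sub>R c)" using assms(1) by (simp add: star_scaleR)
  then show ?thesis unfolding cstar_pos_def by blast
qed

lemma self_adjoint_le_norm:
  assumes "star a = a"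
  shows "cstar_le star a (norm a *\<^sub>R 1)"
proof -
  have "star (norm a *\<^sub>R 1 - a) = norm a *\<^sub>R 1 - a" using assms by (simp add: star_diff star_scaleR)
  moreover have "norm (norm a *\<^sub>R 1 - (norm a *\<^sub>R 1 - a)) \<le> norm a" by simp
  ultimately have "pos (norm a *\<^sub>R 1 - a)" by (auto simp only: pos_iff_near_scalar)
  then show ?thesis using assms unfolding cstar_le_def by (simp add: star_scaleR)
qed

lemma cstar_le_trans: "cstar_le star a b \<Longrightarrow> cstar_le star b c \<Longrightarrow> cstar_le star a c"
  unfolding cstar_le_def using pos_add[of "c - b" "b - a"] by simp

lemma cstar_le_mult_pos:
  assumes "cstar_le star a b" "pos c"
  shows "cstar_le star (a * c) (b * c)"
proof -
  have "pos (b * c - a * c)"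
    using assms pos_mult[of "b - a" c] unfolding cstar_le_def by (simp add: left_diff_distrib)
  then show ?thesis
    using assms pos_self_adjoint[OF assms(2)] unfolding cstar_le_def by (simp add: star_mult mult.commute)
qed

lemma cstar_le_scaleR:
  assumes "0 \<le> r" "cstar_le star a b"
  shows "cstar_le star (r *\<^sub>R a) (r *\<^sub>R b)"
  using assms pos_scaleR[OF assms(1), of "b - a"]
  unfolding cstar_le_def by (simp add: star_scaleR scaleR_diff_right)

lemma pos_inverse:
  assumes gb: "g * b = 1" and pg: "pos g"
  shows "pos b"
proof -
  have "star b * g = 1" using arg_cong[OF gb, of star] by (simp add: star_mult pos_self_adjoint[OF pg])
  then have "star b = b" using gb by (metis mult.assoc mult.commute mult_1_right)
  obtain c where gc: "g = star c * c" using pg unfolding cstar_pos_def by blast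
  have "star (c * b) * (c * b) = (star c * c) * b * b" by (simp add: star_mult \<open>star b = b\<close> ac_simps)
  also have "\<dots> = b" using gb gc by simp
  finally show ?thesis unfolding cstar_pos_def by metis
qed

lemma inverse_ge_inverse_norm:
  assumes gb: "g * b = 1" and pg: "pos g"
  shows "cstar_le star ((1 / norm g) *\<^sub>R 1) b"
proof -
  have "g \<noteq> 0" using gb by auto
  have "cstar_le star (g * b) (norm g *\<^sub>R 1 * b)"
    using self_adjoint_le_norm[OF pos_self_adjoint[OF pg]] pos_inverse[OF assms]
    by (rule cstar_le_mult_pos)
  then have "cstar_le star 1 (norm g *\<^sub>R b)" using gb by simp
  then have "cstar_le star ((1 / norm g) *\<^sub>R 1) ((1 / norm g) *\<^sub>R (norm g *\<^sub>R b))"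
    by (intro cstar_le_scaleR) simp_all
  then show ?thesis using \<open>g \<noteq> 0\<close> by simp
qed

lemma frame_bounds_cancel_square:
  assumes gb: "g * b = 1" and pg: "pos g" and pp: "pos p" and AB: "0 \<le> A" "0 \<le> B"
    and sum: "summable (\<lambda>i. t i * (g * g))"
    and lower: "cstar_le star (A *\<^sub>R (p * g)) (\<Sum>i. t i * (g * g))"
    and upper: "cstar_le star (\<Sum>i. t i * (g * g)) (B *\<^sub>R (p * g))"
  shows "summable t \<and> cstar_le star ((A / norm g) *\<^sub>R p) (suminf t)
    \<and> cstar_le star (suminf t) ((B * norm b) *\<^sub>R p)"
proof -
  have pb: "pos b" by (rule pos_inverse[OF gb pg])
  have cancel: "q * g * (b * b) = q * b" "q * (g * g) * (b * b) = q" for q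
  proof -
    have "q * g * (b * b) = q * (g * b) * b" "q * (g * g) * (b * b) = q * ((g * b) * (g * b))"
      by (simp_all only: ac_simps)
    then show "q * g * (b * b) = q * b" "q * (g * g) * (b * b) = q" using gb by simp_all
  qed
  have "summable (\<lambda>i. t i * (g * g) * (b * b))" by (rule summable_mult2[OF sum])
  then have "summable t" by (simp add: cancel)
  then have sum_eq: "(\<Sum>i. t i * (g * g)) = suminf t * (g * g)" by (rule suminf_mult2[symmetric])
  have pbb: "pos (b * b)" by (rule pos_mult[OF pb pb])
  have "cstar_le star (A *\<^sub>R (p * g) * (b * b)) (suminf t * (g * g) * (b * b))"
    using cstar_le_mult_pos[OF lower pbb] by (simp add: sum_eq)
  then have lower': "cstar_le star (A *\<^sub>R (p * b)) (suminf t)" by (simp add: cancel)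
  have "cstar_le star (suminf t * (g * g) * (b * b)) (B *\<^sub>R (p * g) * (b * b))"
    using cstar_le_mult_pos[OF upper pbb] by (simp add: sum_eq)
  then have upper': "cstar_le star (suminf t) (B *\<^sub>R (p * b))" by (simp add: cancel)
  have "cstar_le star ((A / norm g) *\<^sub>R p) (A *\<^sub>R (p * b))"
    using cstar_le_scaleR[OF AB(1) cstar_le_mult_pos[OF inverse_ge_inverse_norm[OF gb pg] pp]]
    by (simp add: mult.commute)
  moreover have "cstar_le star (B *\<^sub>R (p * b)) ((B * norm b) *\<^sub>R p)"
    using cstar_le_scaleR[OF AB(2) cstar_le_mult_pos[OF self_adjoint_le_norm[OF pos_self_adjoint[OF pb]] pp]]
    by (simp add: mult.commute)
  ultimately show ?thesis
    using \<open>summable t\<close> lower' upper' by (blast intro: cstar_le_trans)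
qed

end

lemma two_ip_orthogonal_left: "ip x z = 0 \<Longrightarrow> two_ip ip x y z = ip x y * ip z z"
  by (simp add: two_ip_def)

lemma two_ip_orthogonal_right: "ip z y = 0 \<Longrightarrow> two_ip ip x y z = ip x y * ip z z"
  by (simp add: two_ip_def)

lemma hilbert_moduleD:
  assumes "hilbert_module star cscale act ip"
  shows "comm_cstar star cscale" "act 1 x = x" "cstar_pos star (ip x x)" "ip x y = star (ip y x)"
  using assms unfolding hilbert_module_def comm_cstar_def by fast+

lemma L_perp_orthogonal:
  assumes hm: "hilbert_module star cscale act ip" and x: "x \<in> L_perp act ip \<xi>"
  shows "ip \<xi> x = 0" "ip x \<xi> = 0"
proof -
  have "ip (act 1 \<xi>) x = 0" using x unfolding L_perp_def by blast
  then show "ip \<xi> x = 0" by (simp add: hilbert_moduleD(2)[OF hm])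
  then show "ip x \<xi> = 0"
    using hilbert_moduleD(4)[OF hm, of x \<xi>] comm_cstar.star_zero[OF hilbert_moduleD(1)[OF hm]] by simp
qed

lemma frame_bounds_on_L_perp:
  assumes hm: "hilbert_module star cscale act ip" and gb: "ip \<xi> \<xi> * b = 1"
    and AB: "0 \<le> A" "0 \<le> B" and x: "x \<in> L_perp act ip \<xi>"
    and frame: "summable (\<lambda>i. two_ip ip x (xs i) \<xi> * two_ip ip (xs i) x \<xi>)
        \<and> cstar_le star (A *\<^sub>R two_ip ip x x \<xi>) (\<Sum>i. two_ip ip x (xs i) \<xi> * two_ip ip (xs i) x \<xi>)
        \<and> cstar_le star (\<Sum>i. two_ip ip x (xs i) \<xi> * two_ip ip (xs i) x \<xi>) (B *\<^sub>R two_ip ip x x \<xi>)"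
  shows "summable (\<lambda>i. ip x (xs i) * ip (xs i) x)
    \<and> cstar_le star ((A / norm (ip \<xi> \<xi>)) *\<^sub>R ip x x) (\<Sum>i. ip x (xs i) * ip (xs i) x)
    \<and> cstar_le star (\<Sum>i. ip x (xs i) * ip (xs i) x) ((B * norm b) *\<^sub>R ip x x)"
proof -
  define g where "g = ip \<xi> \<xi>"
  note orth = L_perp_orthogonal[OF hm x]
  have "two_ip ip x (xs i) \<xi> * two_ip ip (xs i) x \<xi> = ip x (xs i) * ip (xs i) x * (g * g)" for i
    using orth by (simp add: two_ip_orthogonal_left two_ip_orthogonal_right g_def ac_simps)
  moreover have "two_ip ip x x \<xi> = ip x x * g"
    using orth by (simp add: two_ip_orthogonal_left g_def)
  ultimately have "summable (\<lambda>i. ip x (xs i) * ip (xs i) x * (g * g))"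
    "cstar_le star (A *\<^sub>R (ip x x * g)) (\<Sum>i. ip x (xs i) * ip (xs i) x * (g * g))"
    "cstar_le star (\<Sum>i. ip x (xs i) * ip (xs i) x * (g * g)) (B *\<^sub>R (ip x x * g))"
    using frame by simp_all
  with AB show ?thesis
    using comm_cstar.frame_bounds_cancel_square[OF hilbert_moduleD(1)[OF hm] gb[folded g_def]
        hilbert_moduleD(3)[OF hm, of \<xi>, folded g_def] hilbert_moduleD(3)[OF hm, of x], of A B]
    unfolding g_def by auto
qed

theorem proposition2p3:
  fixes star :: "'a::{comm_ring_1, real_normed_algebra_1, banach} \<Rightarrow> 'a"
    and cscale :: "complex \<Rightarrow> 'a \<Rightarrow> 'a"
    and act :: "'a \<Rightarrow> 'e::ab_group_add \<Rightarrow> 'e"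
    and ip :: "'e \<Rightarrow> 'e \<Rightarrow> 'a"
    and \<xi> :: 'e
    and xs :: "nat \<Rightarrow> 'e"
    and A B :: real
  assumes hm: "hilbert_module star cscale act ip"
    and compl: "\<forall>M. submodule act M \<and> hm_closed ip M \<longrightarrow> orth_complemented ip M"
    and inv: "\<exists>b. ip \<xi> \<xi> * b = 1"
    and AB: "0 < A" "A \<le> B"
    and frame: "\<forall>x. summable (\<lambda>i. two_ip ip x (xs i) \<xi> * two_ip ip (xs i) x \<xi>)
        \<and> cstar_le star (A *\<^sub>R two_ip ip x x \<xi>) (\<Sum>i. two_ip ip x (xs i) \<xi> * two_ip ip (xs i) x \<xi>)
        \<and> cstar_le star (\<Sum>i. two_ip ip x (xs i) \<xi> * two_ip ip (xs i) x \<xi>) (B *\<^sub>R two_ip ip x x \<xi>)"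
  shows "\<exists>C D::real. 0 < C \<and> C \<le> D \<and>
    (\<forall>x \<in> L_perp act ip \<xi>. summable (\<lambda>i. ip x (xs i) * ip (xs i) x)
        \<and> cstar_le star (C *\<^sub>R ip x x) (\<Sum>i. ip x (xs i) * ip (xs i) x)
        \<and> cstar_le star (\<Sum>i. ip x (xs i) * ip (xs i) x) (D *\<^sub>R ip x x))"
proof -
  obtain b where gb: "ip \<xi> \<xi> * b = 1" using inv by blast
  then have "ip \<xi> \<xi> \<noteq> 0" by auto
  have "A / norm (ip \<xi> \<xi>) \<le> A * norm b"
    using mult_left_mono[OF norm_mult_ineq[of "ip \<xi> \<xi>" b], of A] gb AB \<open>ip \<xi> \<xi> \<noteq> 0\<close>
    by (simp add: field_simps)
  also have "\<dots> \<le> B * norm b" using AB by (simp add: mult_right_mono)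
  finally have "A / norm (ip \<xi> \<xi>) \<le> B * norm b" .
  moreover have "0 < A / norm (ip \<xi> \<xi>)" using AB \<open>ip \<xi> \<xi> \<noteq> 0\<close> by simp
  moreover note frame_bounds_on_L_perp[OF hm gb, of A B _ xs] frame AB
  ultimately show ?thesis by (intro exI[of _ "A / norm (ip \<xi> \<xi>)"] exI[of _ "B * norm b"]) auto
qed

end
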